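(* Let $n\geq1$ and let $G_n$ be the connected anti-regular graph with loops on $n$ vertices. The eigenvalues $\lambda_1,\ldots,\lambda_n$ of the adjacency matrix $A(G_n)$ are $$\lambda_j=\frac{(-1)^{n+1}}{2\cos\left(\frac{2j-1}{2n+1}\pi\right)},\qquad j=1,2,\ldots,n.$$ Consequently, all eigenvalues of $A(G_n)$ are simple.
   Context: A graph with loops is a pair $(V,E)$ with $E$ a set of 2-element multisets of $V$ (loops allowed, at most one per vertex, no multiple edges); the degree of a vertex counts a loop once. An anti-regular graph with loops is one in which all vertex degrees are distinct; for each $n\ge1$ there is, up to isomorphism, a unique connected one on $n$ vertices, denoted $G_n$, with degree sequence $(1,2,\ldots,n)$. Equivalently, $A(G_n)$ is permutation similar to the $n\times n$ matrix with $(i,j)$ entry $1$ if $i+j\ge n+1$ and $0$ otherwise. The adjacency matrix has diagonal entry $1$ exactly at vertices with a loop. *)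

theory Defs
  imports Complex_Main "Jordan_Normal_Form.Char_Poly"
begin

text \<open>Adjacency matrix of the connected anti-regular graph with loops G_n, in the
  standard labelling: with 1-based indices, entry (i,j) is 1 iff i + j \<ge> n + 1.
  Jordan_Normal_Form matrices are 0-indexed, so the condition becomes i + j \<ge> n - 1.\<close>
definition antireg_adj :: "nat \<Rightarrow> real mat" where
  "antireg_adj n = mat n n (\<lambda>(i, j). if i + j + 2 \<ge> n + 1 then 1 else 0)"

end

theory Submission
  imports Defs
begin

text \<open>With \<open>\<theta> = (2j-1)\<pi>/(2n+1)\<close> and \<open>\<phi> = \<pi> - 2\<theta>\<close>, the vector \<open>v\<^sub>k = cos ((n - 1/2 - k)\<phi>)\<close>
  is an eigenvector: row \<open>i\<close> of \<open>A(G\<^sub>n)\<close> sums the last \<open>i+1\<close> entries of \<open>v\<close>, a Dirichlet-kernel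
  sum \<open>\<Sum>\<^sub>m\<^sub>\<le>\<^sub>i cos ((m + 1/2)\<phi>) = sin ((i+1)\<phi>) / (2 sin (\<phi>/2))\<close>, and the choice of \<theta> makes
  \<open>(n + 1/2)\<phi>\<close> an odd multiple of \<open>\<pi>/2\<close>, which turns \<open>sin ((i+1)\<phi>)\<close> back into \<open>\<pm>v\<^sub>i\<close>.
  The \<open>n\<close> angles lie in \<open>(0, \<pi>)\<close> and are distinct, so the monic degree-\<open>n\<close> characteristic
  polynomial has \<open>n\<close> distinct roots and splits into the stated linear factors.\<close>

lemma sum_cos_half_odd_multiples:
  fixes phi :: real
  shows "2 * sin (phi/2) * (\<Sum>m\<le>N. cos ((real m + 1/2) * phi)) = sin ((real N + 1) * phi)"
proof (induction N)
  case 0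
  then show ?case using sin_times_cos[of "phi/2" "phi/2"] by (simp add: algebra_simps)
next
  case (Suc N)
  have "2 * sin (phi/2) * cos ((real N + 3/2) * phi) = sin ((real N + 2) * phi) - sin ((real N + 1) * phi)"
    using sin_diff_sin[of "(real N + 2) * phi" "(real N + 1) * phi"]
    by (simp add: algebra_simps add_divide_distrib)
  then show ?case using Suc by (simp add: distrib_left algebra_simps)
qed

lemma antireg_adj_carrier: "antireg_adj n \<in> carrier_mat n n"
  unfolding antireg_adj_def by simp

lemma antireg_adj_mult_vec_nth:
  assumes "i < n" "dim_vec v = n"
  shows "(antireg_adj n *\<^sub>v v) $ i = (\<Sum>m\<le>i. v $ (n - 1 - m))"
proof -
  have "(antireg_adj n *\<^sub>v v) $ i = (\<Sum>k<n. (if n \<le> i + k + 1 then 1 else 0) * v $ k)"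
    using assms unfolding antireg_adj_def by (simp add: scalar_prod_def lessThan_atLeast0)
  also have "\<dots> = (\<Sum>k\<in>{k\<in>{..<n}. n \<le> i + k + 1}. v $ k)"
    by (simp only: sum.inter_filter[OF finite_lessThan]) (intro sum.cong refl, simp)
  also have "{k\<in>{..<n}. n \<le> i + k + 1} = (\<lambda>m. n - 1 - m) ` {..i}"
  proof
    show "{k\<in>{..<n}. n \<le> i + k + 1} \<subseteq> (\<lambda>m. n - 1 - m) ` {..i}"
    proof
      fix k assume "k \<in> {k\<in>{..<n}. n \<le> i + k + 1}"
      then show "k \<in> (\<lambda>m. n - 1 - m) ` {..i}"
        by (intro image_eqI[of _ _ "n - 1 - k"]) auto
    qed
    show "(\<lambda>m. n - 1 - m) ` {..i} \<subseteq> {k\<in>{..<n}. n \<le> i + k + 1}"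
      using assms(1) by auto
  qed
  also have "(\<Sum>k\<in>(\<lambda>m. n - 1 - m) ` {..i}. v $ k) = (\<Sum>m\<le>i. v $ (n - 1 - m))"
    using assms(1) by (subst sum.reindex) (auto intro!: inj_onI)
  finally show ?thesis .
qed

definition antireg_angle :: "nat \<Rightarrow> nat \<Rightarrow> real" where
  "antireg_angle n j = (2 * real j - 1) / (2 * real n + 1) * pi"

lemma antireg_angle_bounds:
  assumes "1 \<le> j" "j \<le> n"
  shows "0 < antireg_angle n j" "antireg_angle n j < pi"
proof -
  show "0 < antireg_angle n j"
    unfolding antireg_angle_def using assms by (simp add: field_simps)
  have "(2 * real j - 1) / (2 * real n + 1) < 1"
    using assms by (simp add: field_simps)
  from mult_strict_right_mono[OF this pi_gt_zero] show "antireg_angle n j < pi"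
    unfolding antireg_angle_def by simp
qed

lemma inj_antireg_angle: "inj (antireg_angle n)"
  by (rule inj_onI) (simp add: antireg_angle_def field_simps)

lemma cos_antireg_angle_nonzero:
  assumes "1 \<le> j" "j \<le> n"
  shows "cos (antireg_angle n j) \<noteq> 0"
proof
  assume "cos (antireg_angle n j) = 0"
  then have "antireg_angle n j = pi/2"
    using cos_inj_pi[of _ "pi/2"] antireg_angle_bounds[OF assms] by simp
  then have "(2 * real j - 1) / (2 * real n + 1) * pi = 1/2 * pi"
    unfolding antireg_angle_def by simp
  then have "(2 * real j - 1) / (2 * real n + 1) = 1/2"
    using pi_neq_zero mult_cancel_right by blast
  then have "real (4 * j) = real (2 * n + 3)"
    by (simp add: field_simps)
  then have "4 * j = 2 * n + 3"
    by (simp only: of_nat_eq_iff)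
  then show False by presburger
qed

text \<open>\<open>(n + 1/2)(\<pi> - 2\<theta>) = \<pi>/2 + (n + 1 - 2j)\<pi>\<close>.\<close>

lemma sin_eq_sign_cos_reflected:
  fixes n j i :: nat
  defines "phi \<equiv> pi - 2 * antireg_angle n j"
  shows "sin ((real i + 1) * phi) = (-1) ^ (n + 1) * cos ((real n - 1/2 - real i) * phi)"
proof -
  define y where "y = pi * of_int (int n + 1 - 2 * int j)"
  define Q where "Q = (real n + 1/2) * phi"
  have Qy: "Q = pi/2 + y"
    unfolding Q_def y_def phi_def antireg_angle_def by (simp add: field_simps)
  have "sin y = 0"
    unfolding y_def by (rule sin_npi_int)
  then have "cos Q = 0"
    unfolding Qy by (simp add: cos_add)
  moreover have "sin Q = (-1) ^ (n + 1)"
    unfolding Qy sin_add y_def cos_npi_int by (auto simp: even_add)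
  moreover have "(real n - 1/2 - real i) * phi = Q - (real i + 1) * phi"
    unfolding Q_def by (simp add: algebra_simps)
  ultimately show ?thesis by (simp add: cos_diff)
qed

definition antireg_eigenvalue :: "nat \<Rightarrow> nat \<Rightarrow> real" where
  "antireg_eigenvalue n j = (-1) ^ (n + 1) / (2 * cos (antireg_angle n j))"

lemma inj_on_antireg_eigenvalue: "inj_on (antireg_eigenvalue n) {1..n}"
proof (rule inj_onI)
  fix j k assume jk: "j \<in> {1..n}" "k \<in> {1..n}" "antireg_eigenvalue n j = antireg_eigenvalue n k"
  then have "cos (antireg_angle n j) = cos (antireg_angle n k)"
    using cos_antireg_angle_nonzero[of j n] cos_antireg_angle_nonzero[of k n]
    by (auto simp: antireg_eigenvalue_def field_simps)
  then have "antireg_angle n j = antireg_angle n k"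
    using cos_inj_pi antireg_angle_bounds[of j n] antireg_angle_bounds[of k n] jk by auto
  then show "j = k"
    using inj_antireg_angle by (simp add: inj_eq)
qed

lemma antireg_adj_eigenvalue:
  assumes "1 \<le> j" "j \<le> n"
  shows "eigenvalue (antireg_adj n) (antireg_eigenvalue n j)"
proof -
  define th where "th = antireg_angle n j"
  define phi where "phi = pi - 2 * th"
  define lam where "lam = (-1::real) ^ (n + 1) / (2 * cos th)"
  define v where "v = vec n (\<lambda>k. cos ((real n - 1/2 - real k) * phi))"
  have half_phi: "phi/2 = pi/2 - th"
    unfolding phi_def by simp
  have costh: "cos th \<noteq> 0"
    unfolding th_def using cos_antireg_angle_nonzero[OF assms] .
  have "antireg_adj n *\<^sub>v v = lam \<cdot>\<^sub>v v"
  proof (rule eq_vecI)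
    fix i assume "i < dim_vec (lam \<cdot>\<^sub>v v)"
    then have i: "i < n" unfolding v_def by simp
    have "(antireg_adj n *\<^sub>v v) $ i = (\<Sum>m\<le>i. cos ((real m + 1/2) * phi))"
      using i by (simp add: antireg_adj_mult_vec_nth v_def of_nat_diff add.commute)
    also have "\<dots> = sin ((real i + 1) * phi) / (2 * cos th)"
      using sum_cos_half_odd_multiples[of phi i] costh
      by (simp add: half_phi sin_cos_eq field_simps)
    also have "\<dots> = (lam \<cdot>\<^sub>v v) $ i"
      using i sin_eq_sign_cos_reflected[of i n j]
      unfolding v_def lam_def phi_def th_def by simp
    finally show "(antireg_adj n *\<^sub>v v) $ i = (lam \<cdot>\<^sub>v v) $ i" .
  qed (simp add: v_def antireg_adj_def)
  moreover have "v \<noteq> 0\<^sub>v n"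
  proof
    assume "v = 0\<^sub>v n"
    then have "v $ (n - 1) = 0"
      using assms by simp
    moreover have "v $ (n - 1) = cos (phi/2)"
      using assms unfolding v_def by (simp add: of_nat_diff)
    ultimately have "cos (phi/2) = 0"
      by simp
    moreover have "sin th > 0"
      using antireg_angle_bounds[OF assms] sin_gt_zero unfolding th_def by blast
    ultimately show False
      by (simp add: half_phi cos_sin_eq)
  qed
  ultimately show ?thesis
    unfolding eigenvalue_def eigenvector_def antireg_eigenvalue_def lam_def th_def
    using antireg_adj_carrier[of n] by (intro exI[of _ v]) (auto simp: v_def)
qed

lemma char_poly_eq_prod_distinct_roots:
  fixes A :: "'a :: idom mat"
  assumes A: "A \<in> carrier_mat n n"
    and fin: "finite J" and card: "card J = n" and inj: "inj_on lam J"
    and roots: "\<And>j. j \<in> J \<Longrightarrow> poly (char_poly A) (lam j) = 0"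
  shows "char_poly A = (\<Prod>j\<in>J. [:- lam j, 1:])"
proof -
  have char: "degree (char_poly A) = n \<and> coeff (char_poly A) n = 1"
    by (rule degree_monic_char_poly[OF A])
  have "degree (\<Prod>j\<in>J. [:- lam j, 1:]) = n"
    using card fin by (subst degree_prod_sum_eq) auto
  moreover have "lead_coeff (\<Prod>j\<in>J. [:- lam j, 1:]) = 1"
    by (simp add: lead_coeff_prod)
  ultimately have prod: "degree (\<Prod>j\<in>J. [:- lam j, 1:]) = n"
    "coeff (\<Prod>j\<in>J. [:- lam j, 1:]) n = 1"
    by simp_all
  show ?thesis
  proof (rule poly_eqI_degree_lead_coeff[of _ n _ "lam ` J"])
    show "n \<le> card (lam ` J)" using card_image[OF inj] card by simp
    fix z assume "z \<in> lam ` J"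
    then show "poly (char_poly A) z = poly (\<Prod>j\<in>J. [:- lam j, 1:]) z"
      using roots fin by (auto simp: poly_prod prod_zero_iff)
  qed (use char prod in simp_all)
qed

theorem mainTheorem6:
  fixes n :: nat
  assumes "n \<ge> 1"
  defines "lam \<equiv> (\<lambda>j::nat. (-1) ^ (n + 1) / (2 * cos ((2 * real j - 1) / (2 * real n + 1) * pi)))"
  shows "char_poly (antireg_adj n) = (\<Prod>j = 1..n. [:- lam j, 1:])
         \<and> inj_on lam {1..n}"
proof -
  have lam: "lam = antireg_eigenvalue n"
    unfolding lam_def antireg_eigenvalue_def antireg_angle_def ..
  have "poly (char_poly (antireg_adj n)) (lam j) = 0" if "j \<in> {1..n}" for j
    using that antireg_adj_eigenvalue[of j n] eigenvalue_root_char_poly[OF antireg_adj_carrier]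
    unfolding lam by auto
  then have "char_poly (antireg_adj n) = (\<Prod>j = 1..n. [:- lam j, 1:])"
    unfolding lam
    by (intro char_poly_eq_prod_distinct_roots[OF antireg_adj_carrier] inj_on_antireg_eigenvalue) auto
  then show ?thesis
    unfolding lam using inj_on_antireg_eigenvalue by simp
qed

end
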